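(* For any finite family of Boolean functions $f_1,\dots,f_k:\{0,1\}^n\times\{0,1\}^n\to\{0,1\}$, the garden-hose complexity satisfies \[ GH\Big(\bigoplus_{i=1}^k f_i\Big)\ \le\ 4\sum_{i=1}^k GH(f_i), \] where $\bigoplus_i f_i$ is the pointwise XOR.
   Context: Garden-hose model: Alice holds $x$, Bob holds $y$. There are $m$ pipes, each with one end on Alice's side and one on Bob's side. Depending only on $x$, Alice connects a water tap to one of her pipe ends and connects some disjoint pairs of her remaining pipe ends by hoses; depending only on $y$, Bob connects some disjoint pairs of his pipe ends by hoses. Water from the tap flows through the resulting path and spills out of an open pipe end, on Alice's or Bob's side. A protocol computes $f$ if the water spills on Alice's side when $f(x,y)=0$ and on Bob's side when $f(x,y)=1$. $GH(f)$ is the minimal number of pipes of a garden-hose protocol computing $f$. *)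

theory Defs
  imports Main
begin

text \<open>Pipes are numbered 0,...,m-1. A side is a bool:
  True = Bob's side, False = Alice's side.  A set of disjoint pairs of pipe
  ends on one side is encoded by an involution p on {0..<m}: p i = j with
  j \<noteq> i means the ends of pipes i and j are joined by a hose, and p i = i
  means the end of pipe i on that side is not joined to another pipe end.\<close>

definition hose_matching :: "nat \<Rightarrow> (nat \<Rightarrow> nat) \<Rightarrow> bool" where
  "hose_matching m p \<longleftrightarrow> (\<forall>i<m. p i < m \<and> p (p i) = i)"

text \<open>A position of the water: it has just arrived (through the pipe) at the
  end of pipe j on side s.  If that end is hosed to another pipe end, the water
  enters that pipe and arrives at its other end; otherwise it spills there.\<close>

definition gh_open :: "(nat \<Rightarrow> nat) \<Rightarrow> (nat \<Rightarrow> nat) \<Rightarrow> bool \<times> nat \<Rightarrow> bool" where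
  "gh_open pA pB st = (if fst st then pB (snd st) = snd st else pA (snd st) = snd st)"

definition gh_step :: "(nat \<Rightarrow> nat) \<Rightarrow> (nat \<Rightarrow> nat) \<Rightarrow> bool \<times> nat \<Rightarrow> bool \<times> nat" where
  "gh_step pA pB st = (if fst st then (False, pB (snd st)) else (True, pA (snd st)))"

text \<open>The tap is connected to Alice's end of pipe t, so the water first arrives
  at Bob's end of pipe t.\<close>

definition gh_walk :: "nat \<Rightarrow> (nat \<Rightarrow> nat) \<Rightarrow> (nat \<Rightarrow> nat) \<Rightarrow> nat \<Rightarrow> bool \<times> nat" where
  "gh_walk t pA pB k = (gh_step pA pB ^^ k) (True, t)"

definition gh_spills :: "nat \<Rightarrow> (nat \<Rightarrow> nat) \<Rightarrow> (nat \<Rightarrow> nat) \<Rightarrow> bool \<Rightarrow> bool" where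
  "gh_spills t pA pB s \<longleftrightarrow>
     (\<exists>k. gh_open pA pB (gh_walk t pA pB k)
          \<and> (\<forall>l<k. \<not> gh_open pA pB (gh_walk t pA pB l))
          \<and> fst (gh_walk t pA pB k) = s)"

text \<open>A garden-hose protocol with m pipes for f on inputs x, y \<in> {0,1}^n
  (bit strings of length n).  tap x is the pipe whose Alice end receives the
  tap; pA x, pB y are the hose connections of Alice and Bob.\<close>

definition gh_protocol ::
  "nat \<Rightarrow> (bool list \<Rightarrow> bool list \<Rightarrow> bool) \<Rightarrow> nat \<Rightarrow>
   (bool list \<Rightarrow> nat) \<Rightarrow> (bool list \<Rightarrow> nat \<Rightarrow> nat) \<Rightarrow> (bool list \<Rightarrow> nat \<Rightarrow> nat) \<Rightarrow> bool" where
  "gh_protocol n f m tap pA pB \<longleftrightarrow>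
     (\<forall>x. length x = n \<longrightarrow> tap x < m \<and> hose_matching m (pA x) \<and> pA x (tap x) = tap x)
   \<and> (\<forall>y. length y = n \<longrightarrow> hose_matching m (pB y))
   \<and> (\<forall>x y. length x = n \<longrightarrow> length y = n \<longrightarrow> gh_spills (tap x) (pA x) (pB y) (f x y))"

definition GH :: "nat \<Rightarrow> (bool list \<Rightarrow> bool list \<Rightarrow> bool) \<Rightarrow> nat" where
  "GH n f = (LEAST m. \<exists>tap pA pB. gh_protocol n f m tap pA pB)"

definition xor_funs :: "(bool list \<Rightarrow> bool list \<Rightarrow> bool) list \<Rightarrow> bool list \<Rightarrow> bool list \<Rightarrow> bool" where
  "xor_funs fs x y = foldr (\<lambda>f acc. f x y \<noteq> acc) fs False"

end

theory Submission
  imports Defs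
begin

text \<open>Hoses pair up pipe ends, so the water's path can be traced backwards. Given a protocol for
  \<open>f\<close>, run the water through one copy of it; where it would spill, lead it into the same end of
  a second copy (one copy for each side) and let it retrace its path there back to the tap pipe.
  It then arrives at one of two designated pipe ends according to \<open>f x y\<close>, without spilling.
  Such a ``switch'' for \<open>f\<close> costs \<open>3 GH(f) + 1\<close> pipes. Feeding the two outputs of a switch
  for \<open>g\<close> into two copies for \<open>f\<close> that share their two escape copies gives a switch for
  \<open>f \<oplus> g\<close> at the extra cost of \<open>4 GH(f)\<close> pipes, and one spare pipe turns the final switch
  into a protocol.\<close>

definition gh_path :: "(nat \<Rightarrow> nat) \<Rightarrow> (nat \<Rightarrow> nat) \<Rightarrow> bool \<times> nat \<Rightarrow> bool \<times> nat \<Rightarrow> nat \<Rightarrow> bool" where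
  "gh_path pA pB a b k \<longleftrightarrow>
     (gh_step pA pB ^^ k) a = b \<and> (\<forall>l<k. \<not> gh_open pA pB ((gh_step pA pB ^^ l) a))"

lemma gh_path_0 [simp]: "gh_path pA pB a b 0 \<longleftrightarrow> a = b"
  by (simp add: gh_path_def)

lemma gh_path_Suc:
  "gh_path pA pB a b (Suc k) \<longleftrightarrow> \<not> gh_open pA pB a \<and> gh_path pA pB (gh_step pA pB a) b k"
proof -
  have "(gh_step pA pB ^^ l) (gh_step pA pB a) = (gh_step pA pB ^^ Suc l) a" for l
    by (simp add: funpow_swap1)
  then show ?thesis
    unfolding gh_path_def All_less_Suc2 by auto
qed

lemma gh_path_trans: "gh_path pA pB a b k \<Longrightarrow> gh_path pA pB b c k' \<Longrightarrow> gh_path pA pB a c (k + k')"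
  by (induction k arbitrary: a) (auto simp: gh_path_Suc)

lemma gh_path_split:
  assumes "gh_path pA pB a b k" and "l \<le> k"
  shows "gh_path pA pB a ((gh_step pA pB ^^ l) a) l"
    and "gh_path pA pB ((gh_step pA pB ^^ l) a) b (k - l)"
proof -
  have "(gh_step pA pB ^^ l') ((gh_step pA pB ^^ l) a) = (gh_step pA pB ^^ (l' + l)) a" for l'
    by (simp add: funpow_add)
  then show "gh_path pA pB a ((gh_step pA pB ^^ l) a) l"
    and "gh_path pA pB ((gh_step pA pB ^^ l) a) b (k - l)"
    using assms unfolding gh_path_def by auto
qed

lemma gh_spills_iff_path:
  "gh_spills t pA pB s \<longleftrightarrow> (\<exists>k b. gh_path pA pB (True, t) b k \<and> gh_open pA pB b \<and> fst b = s)"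
  unfolding gh_spills_def gh_path_def gh_walk_def by auto

lemma gh_spills_after_path:
  "gh_path pA pB (True, t) b k \<Longrightarrow> gh_open pA pB b \<Longrightarrow> gh_spills t pA pB (fst b)"
  unfolding gh_spills_iff_path by blast

lemma gh_step_lt:
  "hose_matching m pA \<Longrightarrow> hose_matching m pB \<Longrightarrow> snd a < m \<Longrightarrow> snd (gh_step pA pB a) < m"
  by (cases a) (auto simp: gh_step_def hose_matching_def)

lemma gh_path_lt:
  "hose_matching m pA \<Longrightarrow> hose_matching m pB \<Longrightarrow> snd a < m \<Longrightarrow> gh_path pA pB a b k \<Longrightarrow> snd b < m"
proof (induction k arbitrary: a)
  case (Suc k)
  then show ?case
    using gh_step_lt[OF Suc.prems(1-3)] by (auto simp: gh_path_Suc)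
qed simp

lemma gh_path_reverse:
  assumes "hose_matching m pA" "hose_matching m pB"
  shows "snd a < m \<Longrightarrow> gh_path pA pB a b k \<Longrightarrow> gh_path pA pB (\<not> fst b, snd b) (\<not> fst a, snd a) k"
proof (induction k arbitrary: a)
  case 0
  then show ?case by simp
next
  case (Suc k)
  obtain s j where a: "a = (s, j)" by (cases a)
  from Suc.prems have closed: "\<not> gh_open pA pB a" and rest: "gh_path pA pB (gh_step pA pB a) b k"
    by (auto simp: gh_path_Suc)
  have "snd (gh_step pA pB a) < m"
    using gh_step_lt[OF assms Suc.prems(1)] .
  from Suc.IH[OF this rest]
  have "gh_path pA pB (\<not> fst b, snd b) (\<not> fst (gh_step pA pB a), snd (gh_step pA pB a)) k" .
  moreover have "gh_path pA pB (\<not> fst (gh_step pA pB a), snd (gh_step pA pB a)) (\<not> s, j) (Suc 0)"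
    using closed Suc.prems(1) assms unfolding a
    by (auto simp: gh_path_Suc gh_open_def gh_step_def hose_matching_def)
  ultimately show ?case
    using gh_path_trans a by fastforce
qed

text \<open>A path from one end of a pipe to its other end would, by reversibility, be its own reverse;
  at its midpoint the water would then be at both ends of a pipe at once, or bounce back at a
  free end.\<close>

lemma gh_path_not_to_opposite_end:
  assumes hm: "hose_matching m pA" "hose_matching m pB" and "snd a < m"
  shows "\<not> gh_path pA pB a (\<not> fst a, snd a) k"
proof
  assume path: "gh_path pA pB a (\<not> fst a, snd a) k"
  let ?w = "\<lambda>l. (gh_step pA pB ^^ l) a"
  have mirror: "?w (k - l) = (\<not> fst (?w l), snd (?w l))" if "l \<le> k" for l
  proof -
    have "gh_path pA pB a (?w l) l" and "gh_path pA pB (?w l) (\<not> fst a, snd a) (k - l)"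
      using gh_path_split[OF path that] by auto
    then have "gh_path pA pB a (\<not> fst (?w l), snd (?w l)) (k - l)"
      using gh_path_reverse[OF hm] gh_path_lt[OF hm \<open>snd a < m\<close>] by fastforce
    then show ?thesis
      by (simp add: gh_path_def)
  qed
  have "\<exists>h. k = h + h \<or> k = Suc (h + h)"
    by presburger
  then obtain h where "k = h + h \<or> k = Suc (h + h)" ..
  then show False
  proof
    assume "k = h + h"
    then have "?w h = (\<not> fst (?w h), snd (?w h))"
      using mirror[of h] by simp
    then show False
      by (metis fst_conv)
  next
    assume k: "k = Suc (h + h)"
    then have "gh_step pA pB (?w h) = (\<not> fst (?w h), snd (?w h))"
      using mirror[of h] by (simp add: Suc_diff_le)
    then have "gh_open pA pB (?w h)"
      unfolding gh_step_def gh_open_def by (simp split: if_splits)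
    then show False
      using path k unfolding gh_path_def by auto
  qed
qed

definition hoses_embed :: "nat \<Rightarrow> nat \<Rightarrow> (nat \<Rightarrow> nat) \<Rightarrow> (nat \<Rightarrow> nat) \<Rightarrow> bool" where
  "hoses_embed m off p q \<longleftrightarrow> (\<forall>j<m. p j \<noteq> j \<longrightarrow> q (off + j) = off + p j)"

lemma gh_path_embed:
  assumes hm: "hose_matching m pA" "hose_matching m pB"
    and emb: "hoses_embed m off pA qA" "hoses_embed m off pB qB"
  shows "snd a < m \<Longrightarrow> gh_path pA pB a b k \<Longrightarrow> gh_path qA qB (fst a, off + snd a) (fst b, off + snd b) k"
proof (induction k arbitrary: a)
  case 0
  then show ?case by simp
next
  case (Suc k)
  obtain s j where a: "a = (s, j)" by (cases a)
  from Suc.prems have closed: "\<not> gh_open pA pB a" and rest: "gh_path pA pB (gh_step pA pB a) b k"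
    by (auto simp: gh_path_Suc)
  have "snd (gh_step pA pB a) < m"
    using gh_step_lt[OF hm Suc.prems(1)] .
  from Suc.IH[OF this rest]
  have "gh_path qA qB (fst (gh_step pA pB a), off + snd (gh_step pA pB a)) (fst b, off + snd b) k" .
  moreover have "\<not> gh_open qA qB (s, off + j)"
    and "gh_step qA qB (s, off + j) = (fst (gh_step pA pB a), off + snd (gh_step pA pB a))"
    using closed Suc.prems(1) emb unfolding a hoses_embed_def gh_open_def gh_step_def by auto
  ultimately show ?case
    using a by (simp add: gh_path_Suc)
qed

lemma hose_matching_join:
  assumes "hose_matching m p" "a < m" "b < m" "p a = a" "p b = b" "a \<noteq> b"
  shows "hose_matching m (p(a := b, b := a))"
  using assms unfolding hose_matching_def by (metis fun_upd_apply)

lemma hoses_embed_join: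
  assumes "hoses_embed m off p q" "q a = a" "q b = b"
  shows "hoses_embed m off p (q(a := b, b := a))"
  using assms unfolding hoses_embed_def by auto

lemma hoses_embed_refl: "hoses_embed m 0 p p"
  by (simp add: hoses_embed_def)

lemma gh_path_join:
  assumes "hose_matching M qA" "hose_matching M qB" "qA a = a" "qA b = b"
    and "snd s < M" "gh_path qA qB s s' k"
  shows "gh_path (qA(a := b, b := a)) qB s s' k"
  using gh_path_embed[OF assms(1,2) hoses_embed_join[OF hoses_embed_refl assms(3,4)] hoses_embed_refl assms(5,6)]
  by simp

lemma copy_index_lt:
  assumes "c < r" "j < m"
  shows "M + c * m + j < M + r * (m::nat)"
proof -
  have "c * m + j < Suc c * m"
    using assms(2) by simp
  also have "\<dots> \<le> r * m"
    using assms(1) by (intro mult_le_mono1) simp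
  finally show ?thesis by simp
qed

lemma copy_index_cases:
  assumes "M \<le> i" "i < M + r * m"
  obtains c j where "c < r" "j < m" "i = M + c * m + (j::nat)"
proof -
  have "0 < m" using assms by (cases m) auto
  then show thesis
    using assms that[of "(i - M) div m" "(i - M) mod m"]
    by (simp add: div_less_iff_less_mult add.assoc[symmetric])
qed

text \<open>Pipes \<open>0, \<dots>, M - 1\<close> keep the hoses \<open>N\<close>; they are followed by \<open>r\<close> copies of the hoses \<open>p\<close>
  on \<open>m\<close> pipes, copy \<open>c\<close> occupying the pipes \<open>M + c * m + j\<close> for \<open>j < m\<close>. The end \<open>j\<close> of copy
  \<open>c\<close>, if free in \<open>p\<close>, is joined to the end \<open>j\<close> of copy \<open>\<sigma> j c\<close> (and stays free if \<open>\<sigma> j c = c\<close>).\<close>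

definition copy_hoses ::
  "nat \<Rightarrow> nat \<Rightarrow> nat \<Rightarrow> (nat \<Rightarrow> nat) \<Rightarrow> (nat \<Rightarrow> nat) \<Rightarrow> (nat \<Rightarrow> nat \<Rightarrow> nat) \<Rightarrow> nat \<Rightarrow> nat" where
  "copy_hoses M m r N p \<sigma> i =
     (if i < M then N i
      else if i < M + r * m then
        (let c = (i - M) div m; j = (i - M) mod m in
         if p j \<noteq> j then M + c * m + p j else M + \<sigma> j c * m + j)
      else i)"

lemma copy_hoses_low: "i < M \<Longrightarrow> copy_hoses M m r N p \<sigma> i = N i"
  by (simp add: copy_hoses_def)

lemma copy_hoses_copy:
  "c < r \<Longrightarrow> j < m \<Longrightarrow> copy_hoses M m r N p \<sigma> (M + c * m + j) =
     (if p j \<noteq> j then M + c * m + p j else M + \<sigma> j c * m + j)"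
  using copy_index_lt[of c r j m M] by (simp add: copy_hoses_def add.assoc)

lemma hose_matching_copy_hoses:
  assumes N: "hose_matching M N" and p: "hose_matching m p"
    and \<sigma>: "\<And>j c. j < m \<Longrightarrow> c < r \<Longrightarrow> \<sigma> j c < r \<and> \<sigma> j (\<sigma> j c) = c"
  shows "hose_matching (M + r * m) (copy_hoses M m r N p \<sigma>)"
  unfolding hose_matching_def
proof (intro allI impI)
  fix i assume i: "i < M + r * m"
  let ?q = "copy_hoses M m r N p \<sigma>"
  show "?q i < M + r * m \<and> ?q (?q i) = i"
  proof (cases "i < M")
    case True
    then show ?thesis
      using N by (simp add: copy_hoses_low hose_matching_def trans_less_add1)
  next
    case False
    then obtain c j where c: "c < r" and j: "j < m" and i_eq: "i = M + c * m + j"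
      using copy_index_cases i by (metis not_less)
    have pj: "p j < m" "p (p j) = j"
      using p j by (auto simp: hose_matching_def)
    show ?thesis
    proof (cases "p j = j")
      case True
      have "\<sigma> j c < r" "\<sigma> j (\<sigma> j c) = c"
        using \<sigma>[OF j c] by auto
      then show ?thesis
        using True copy_index_lt[OF _ j] by (simp add: i_eq copy_hoses_copy[OF c j] copy_hoses_copy j)
    next
      case False
      then show ?thesis
        using pj copy_index_lt[OF c pj(1), of M]
        by (simp add: i_eq copy_hoses_copy[OF c j] copy_hoses_copy[OF c pj(1)])
    qed
  qed
qed

lemma hoses_embed_copy_hoses: "c < r \<Longrightarrow> hoses_embed m (M + c * m) p (copy_hoses M m r N p \<sigma>)"
  by (simp add: hoses_embed_def copy_hoses_copy add.assoc[symmetric])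

lemma hoses_embed_copy_hoses_low: "hoses_embed M 0 N (copy_hoses M m r N p \<sigma>)"
  by (simp add: hoses_embed_def copy_hoses_low)

text \<open>Where the water would spill in copy \<open>c\<close>, it passes to the same end of copy \<open>cA\<close> (Alice's
  side) or \<open>cB\<close> (Bob's side) and retraces its path there. It never spills at Alice's end of the
  tap pipe of copy \<open>c\<close> (\<open>gh_path_not_to_opposite_end\<close>), so that end needs no routing.\<close>

lemma gh_path_through_copy_hoses:
  assumes hm: "hose_matching m pA" "hose_matching m pB" and "t < m"
    and spill: "gh_spills t pA pB s"
    and "c < r" "cA < r" "cB < r" "c \<noteq> cA" "c \<noteq> cB"
    and \<sigma>A: "\<And>j. j < m \<Longrightarrow> j \<noteq> t \<Longrightarrow> \<sigma>A j c = cA" and \<sigma>B: "\<And>j. j < m \<Longrightarrow> \<sigma>B j c = cB"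
  shows "\<exists>k. gh_path (copy_hoses M m r NA pA \<sigma>A) (copy_hoses M m r NB pB \<sigma>B)
           (True, M + c * m + t) (False, M + (if s then cB else cA) * m + t) k"
proof -
  let ?QA = "copy_hoses M m r NA pA \<sigma>A" and ?QB = "copy_hoses M m r NB pB \<sigma>B"
  let ?d = "if s then cB else cA"
  from spill obtain k e where path: "gh_path pA pB (True, t) (s, e) k" and "gh_open pA pB (s, e)"
    unfolding gh_spills_iff_path by fastforce
  have "e < m"
    using gh_path_lt[OF hm _ path] \<open>t < m\<close> by simp
  have embed: "gh_path pA pB a b k \<Longrightarrow> snd a < m \<Longrightarrow>
      gh_path ?QA ?QB (fst a, M + c' * m + snd a) (fst b, M + c' * m + snd b) k" if "c' < r" for a b c'
    using gh_path_embed[OF hm hoses_embed_copy_hoses hoses_embed_copy_hoses, OF that that]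
    by (simp add: add.assoc)
  have forth: "gh_path ?QA ?QB (True, M + c * m + t) (s, M + c * m + e) k"
    using embed[OF \<open>c < r\<close> path] \<open>t < m\<close> by simp
  have cross: "gh_path ?QA ?QB (s, M + c * m + e) (\<not> s, M + ?d * m + e) (Suc 0)"
  proof (cases s)
    case True
    then have "pB e = e"
      using \<open>gh_open pA pB (s, e)\<close> by (simp add: gh_open_def)
    then show ?thesis
      using True \<open>e < m\<close> \<open>c < r\<close> \<open>c \<noteq> cB\<close> \<sigma>B[OF \<open>e < m\<close>]
      by (simp add: gh_path_Suc gh_open_def gh_step_def copy_hoses_copy)
  next
    case False
    then have "pA e = e"
      using \<open>gh_open pA pB (s, e)\<close> by (simp add: gh_open_def)
    moreover have "e \<noteq> t"
      using gh_path_not_to_opposite_end[OF hm, of "(True, t)" k] path False \<open>t < m\<close> by auto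
    ultimately show ?thesis
      using False \<open>e < m\<close> \<open>c < r\<close> \<open>c \<noteq> cA\<close> \<sigma>A[OF \<open>e < m\<close>]
      by (simp add: gh_path_Suc gh_open_def gh_step_def copy_hoses_copy)
  qed
  have "?d < r"
    using \<open>cA < r\<close> \<open>cB < r\<close> by simp
  moreover have "gh_path pA pB (\<not> s, e) (False, t) k"
    using gh_path_reverse[OF hm _ path] \<open>t < m\<close> by simp
  ultimately have retrace: "gh_path ?QA ?QB (\<not> s, M + ?d * m + e) (False, M + ?d * m + t) k"
    using embed \<open>e < m\<close> by fastforce
  show ?thesis
    using gh_path_trans[OF gh_path_trans[OF forth cross] retrace] by blast
qed

text \<open>A switch for \<open>g\<close> leads the water from the tap to Alice's end of the output pipe
  \<open>out x (g x y)\<close>, which is left free. Pipe \<open>0\<close> is kept free at both ends: joining it to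
  \<open>out x True\<close> turns a switch into a protocol.\<close>

definition gh_switch ::
  "nat \<Rightarrow> (bool list \<Rightarrow> bool list \<Rightarrow> bool) \<Rightarrow> nat \<Rightarrow> (bool list \<Rightarrow> nat) \<Rightarrow> (bool list \<Rightarrow> bool \<Rightarrow> nat) \<Rightarrow>
   (bool list \<Rightarrow> nat \<Rightarrow> nat) \<Rightarrow> (bool list \<Rightarrow> nat \<Rightarrow> nat) \<Rightarrow> bool" where
  "gh_switch n g M tap out NA NB \<longleftrightarrow>
     (\<forall>x. length x = n \<longrightarrow> hose_matching M (NA x) \<and> distinct [0, tap x, out x False, out x True]
        \<and> (\<forall>i \<in> {0, tap x, out x False, out x True}. i < M \<and> NA x i = i))
   \<and> (\<forall>y. length y = n \<longrightarrow> hose_matching M (NB y) \<and> NB y 0 = 0)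
   \<and> (\<forall>x y. length x = n \<longrightarrow> length y = n \<longrightarrow>
        (\<exists>k. gh_path (NA x) (NB y) (True, tap x) (False, out x (g x y)) k))"

lemma gh_switch_protocol:
  assumes "gh_switch n g M tap out NA NB"
  shows "gh_protocol n g M tap (\<lambda>x. (NA x)(out x True := 0, 0 := out x True)) NB"
  unfolding gh_protocol_def
proof (intro conjI allI impI)
  fix x :: "bool list" assume x: "length x = n"
  let ?QA = "(NA x)(out x True := 0, 0 := out x True)"
  have NA: "hose_matching M (NA x)" "distinct [0, tap x, out x False, out x True]"
    "\<forall>i \<in> {0, tap x, out x False, out x True}. i < M \<and> NA x i = i"
    using assms x by (simp_all add: gh_switch_def)
  then show "tap x < M" "hose_matching M ?QA" "?QA (tap x) = tap x"
    by (auto intro: hose_matching_join)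
  fix y :: "bool list" assume y: "length y = n"
  have NB: "hose_matching M (NB y)" "NB y 0 = 0"
    using assms y by (simp_all add: gh_switch_def)
  obtain k where "gh_path (NA x) (NB y) (True, tap x) (False, out x (g x y)) k"
    using assms x y unfolding gh_switch_def by blast
  then have path: "gh_path ?QA (NB y) (True, tap x) (False, out x (g x y)) k"
    using NA NB by (intro gh_path_join) auto
  show "gh_spills (tap x) ?QA (NB y) (g x y)"
  proof (cases "g x y")
    case False
    have "gh_open ?QA (NB y) (False, out x False)"
      using NA by (simp add: gh_open_def)
    then show ?thesis
      using gh_spills_after_path[OF path] False by simp
  next
    case True
    have "gh_path ?QA (NB y) (False, out x True) (True, 0) (Suc 0)"
      using NA by (simp add: gh_path_Suc gh_open_def gh_step_def)
    moreover have "gh_open ?QA (NB y) (True, 0)"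
      using NB by (simp add: gh_open_def)
    ultimately show ?thesis
      using gh_spills_after_path[OF gh_path_trans[OF path]] True by fastforce
  qed
next
  fix y :: "bool list" assume "length y = n"
  then show "hose_matching M (NB y)"
    using assms by (simp add: gh_switch_def)
qed

text \<open>Pipe \<open>0\<close> is the spare pipe, followed by three copies of the protocol: copy \<open>0\<close> receives the
  tap, its free ends lead to copy \<open>1\<close> on Alice's side and to copy \<open>2\<close> on Bob's side.\<close>

lemma gh_switch_of_protocol:
  assumes P: "gh_protocol n f m tap pA pB"
  shows "\<exists>tap' out NA NB. gh_switch n f (1 + 3 * m) tap' out NA NB"
proof -
  define \<sigma>A where "\<sigma>A t j c = (if j = t \<or> c = 2 then c else 1 - c)" for t j c :: nat
  define \<sigma>B where "\<sigma>B (j::nat) c = (if c = 1 then c else 2 - c)" for j c :: nat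
  define NA where "NA x = copy_hoses 1 m 3 (\<lambda>i. i) (pA x) (\<sigma>A (tap x))" for x
  define NB where "NB y = copy_hoses 1 m 3 (\<lambda>i. i) (pB y) \<sigma>B" for y
  define out where "out x b = 1 + (if b then 2 else 1) * m + tap x" for x b
  have "gh_switch n f (1 + 3 * m) (\<lambda>x. 1 + tap x) out NA NB"
    unfolding gh_switch_def
  proof (intro conjI allI impI)
    fix x :: "bool list" assume x: "length x = n"
    have t: "tap x < m" "hose_matching m (pA x)" "pA x (tap x) = tap x"
      using P x by (simp_all add: gh_protocol_def)
    show "hose_matching (1 + 3 * m) (NA x)"
      unfolding NA_def
      by (rule hose_matching_copy_hoses[OF _ t(2)]) (auto simp: hose_matching_def \<sigma>A_def)
    show "distinct [0, 1 + tap x, out x False, out x True]"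
      using t by (simp add: out_def)
    have "1 + c * m + tap x < 1 + 3 * m \<and> NA x (1 + c * m + tap x) = 1 + c * m + tap x" if "c < 3" for c
      using copy_index_lt[OF that t(1), of 1] copy_hoses_copy[OF that t(1), of 1 "\<lambda>i. i" "pA x"] t(3)
      by (simp add: NA_def \<sigma>A_def)
    from this[of 0] this[of 1] this[of 2]
    show "\<forall>i \<in> {0, 1 + tap x, out x False, out x True}. i < 1 + 3 * m \<and> NA x i = i"
      by (simp add: out_def NA_def copy_hoses_low)
  next
    fix y :: "bool list" assume y: "length y = n"
    have pB: "hose_matching m (pB y)"
      using P y by (simp add: gh_protocol_def)
    show "hose_matching (1 + 3 * m) (NB y)"
      unfolding NB_def
      by (rule hose_matching_copy_hoses[OF _ pB]) (auto simp: hose_matching_def \<sigma>B_def)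
    show "NB y 0 = 0"
      by (simp add: NB_def copy_hoses_low)
  next
    fix x y :: "bool list" assume x: "length x = n" and y: "length y = n"
    have "tap x < m" "hose_matching m (pA x)" "hose_matching m (pB y)" "gh_spills (tap x) (pA x) (pB y) (f x y)"
      using P x y by (simp_all add: gh_protocol_def)
    from gh_path_through_copy_hoses[OF this(2,3,1,4), of 0 3 1 2 "\<sigma>A (tap x)" \<sigma>B 1 "\<lambda>i. i" "\<lambda>i. i"]
    show "\<exists>k. gh_path (NA x) (NB y) (True, 1 + tap x) (False, out x (f x y)) k"
      by (simp add: NA_def NB_def out_def \<sigma>A_def \<sigma>B_def)
  qed
  then show ?thesis by blast
qed

text \<open>A switch for \<open>g\<close> on \<open>M\<close> pipes followed by four copies of a protocol for \<open>f\<close>. The output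
  pipe \<open>out b\<close> of the switch feeds copy \<open>b\<close> (\<open>b = 0, 1\<close>). The free ends of copies \<open>0\<close> and \<open>1\<close>
  lead into copies \<open>2\<close> and \<open>3\<close> in opposite ways, so the water ends at the tap end of copy
  \<open>2\<close> or \<open>3\<close> according to the value of \<open>f \<oplus> g\<close>.\<close>

definition xor_stage_A ::
  "nat \<Rightarrow> nat \<Rightarrow> (nat \<Rightarrow> nat) \<Rightarrow> (bool \<Rightarrow> nat) \<Rightarrow> (nat \<Rightarrow> nat) \<Rightarrow> nat \<Rightarrow> nat \<Rightarrow> nat" where
  "xor_stage_A M m NA out pA t =
     (copy_hoses M m 4 NA pA (\<lambda>j c. if j = t then c else (c + 2) mod 4))
       (out False := M + t, M + t := out False, out True := M + m + t, M + m + t := out True)"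

definition xor_stage_B :: "nat \<Rightarrow> nat \<Rightarrow> (nat \<Rightarrow> nat) \<Rightarrow> (nat \<Rightarrow> nat) \<Rightarrow> nat \<Rightarrow> nat" where
  "xor_stage_B M m NB pB = copy_hoses M m 4 NB pB (\<lambda>j c. 3 - c)"

lemma hose_matching_xor_stage_B:
  "hose_matching M NB \<Longrightarrow> hose_matching m pB \<Longrightarrow> hose_matching (M + 4 * m) (xor_stage_B M m NB pB)"
  unfolding xor_stage_B_def by (rule hose_matching_copy_hoses) auto

lemma xor_stage_B_low: "i < M \<Longrightarrow> xor_stage_B M m NB pB i = NB i"
  by (simp add: xor_stage_B_def copy_hoses_low)

context
  fixes M m :: nat and NA pA :: "nat \<Rightarrow> nat" and out :: "bool \<Rightarrow> nat" and t :: nat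
  assumes NA: "hose_matching M NA" "out False < M" "out True < M" "out False \<noteq> out True"
    "NA (out False) = out False" "NA (out True) = out True"
    and pA: "hose_matching m pA" "t < m" "pA t = t"
begin

private abbreviation "q \<equiv> copy_hoses M m 4 NA pA (\<lambda>j c. if j = t then c else (c + 2) mod 4)"

private lemma copies_tap_end: "c < 4 \<Longrightarrow> q (M + c * m + t) = M + c * m + t \<and> M + c * m + t < M + 4 * m"
  using copy_hoses_copy[of c 4 t m M NA pA] copy_index_lt[of c 4 t m M] pA by simp

private lemma hose_matching_copies: "hose_matching (M + 4 * m) q"
  by (rule hose_matching_copy_hoses[OF NA(1) pA(1)]) presburger

private lemma copies_fix_ends:
  "q (out False) = out False" "q (out True) = out True" "q (M + t) = M + t" "q (M + m + t) = M + m + t"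
  using NA copies_tap_end[of 0] copies_tap_end[of 1] by (simp_all add: copy_hoses_low)

private abbreviation "q1 \<equiv> q(out False := M + t, M + t := out False)"

private lemma hose_matching_first_join: "hose_matching (M + 4 * m) q1"
  using NA pA copies_fix_ends by (intro hose_matching_join[OF hose_matching_copies]) auto

private lemma first_join_fix_ends: "q1 (out True) = out True" "q1 (M + m + t) = M + m + t"
  using NA pA copies_fix_ends by auto

lemma hose_matching_xor_stage_A: "hose_matching (M + 4 * m) (xor_stage_A M m NA out pA t)"
  unfolding xor_stage_A_def
  using NA pA first_join_fix_ends by (intro hose_matching_join[OF hose_matching_first_join]) auto

lemma xor_stage_A_fixes:
  "i < M \<Longrightarrow> NA i = i \<Longrightarrow> i \<noteq> out False \<Longrightarrow> i \<noteq> out True \<Longrightarrow> xor_stage_A M m NA out pA t i = i"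
  "c \<in> {2, 3} \<Longrightarrow> xor_stage_A M m NA out pA t (M + c * m + t) = M + c * m + t"
  using NA copies_tap_end[of c] pA(2)
  by (auto simp: xor_stage_A_def copy_hoses_low)

lemma gh_path_xor_stage:
  assumes NB: "hose_matching M NB" and pB: "hose_matching m pB" and spill: "gh_spills t pA pB s"
    and "tap0 < M" and path: "gh_path NA NB (True, tap0) (False, out b) k"
  shows "\<exists>k. gh_path (xor_stage_A M m NA out pA t) (xor_stage_B M m NB pB)
           (True, tap0) (False, M + (if s \<noteq> b then 3 else 2) * m + t) k"
proof -
  let ?QA = "xor_stage_A M m NA out pA t" and ?QB = "xor_stage_B M m NB pB"
  define c where "c = (if b then 1 else 0 :: nat)"
  have QB: "hose_matching (M + 4 * m) ?QB"
    using hose_matching_xor_stage_B[OF NB pB] .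
  have lift: "gh_path ?QA ?QB a a' l" if "gh_path q ?QB a a' l" "snd a < M + 4 * m" for a a' l
  proof -
    have "gh_path q1 ?QB a a' l"
      using that NA pA copies_fix_ends by (intro gh_path_join[OF hose_matching_copies QB]) auto
    then show ?thesis
      unfolding xor_stage_A_def
      using that first_join_fix_ends by (intro gh_path_join[OF hose_matching_first_join QB]) auto
  qed
  have "gh_path q ?QB (True, tap0) (False, out b) k"
    using gh_path_embed[OF NA(1) NB hoses_embed_copy_hoses_low[of M NA m 4 pA]
        hoses_embed_copy_hoses_low[of M NB m 4 pB] _ path] \<open>tap0 < M\<close>
    by (simp add: xor_stage_B_def)
  then have enter: "gh_path ?QA ?QB (True, tap0) (False, out b) k"
    using lift \<open>tap0 < M\<close> by simp
  have "?QA (out b) = M + c * m + t"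
    using NA(2-4) by (cases b) (simp_all add: xor_stage_A_def c_def)
  moreover have "out b < M"
    using NA(2,3) by (cases b) simp_all
  ultimately have step: "gh_path ?QA ?QB (False, out b) (True, M + c * m + t) (Suc 0)"
    by (simp add: gh_path_Suc gh_open_def gh_step_def)
  have "\<exists>k. gh_path q ?QB (True, M + c * m + t) (False, M + (if s then 3 - c else c + 2) * m + t) k"
    unfolding xor_stage_B_def
    by (rule gh_path_through_copy_hoses[OF pA(1) pB pA(2) spill]) (auto simp: c_def)
  moreover have "(if s then 3 - c else c + 2) = (if s \<noteq> b then 3 else 2 :: nat)"
    by (simp add: c_def)
  moreover have "M + c * m + t < M + 4 * m"
    using copy_index_lt[of c 4 t m M] pA(2) by (simp add: c_def)
  ultimately obtain k' where
    "gh_path ?QA ?QB (True, M + c * m + t) (False, M + (if s \<noteq> b then 3 else 2) * m + t) k'"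
    using lift by fastforce
  then show ?thesis
    using gh_path_trans[OF gh_path_trans[OF enter step]] by blast
qed

end

lemma gh_switch_xor:
  assumes S: "gh_switch n g M tap out NA NB" and P: "gh_protocol n f m tap' pA pB"
  shows "gh_switch n (\<lambda>x y. f x y \<noteq> g x y) (M + 4 * m) tap (\<lambda>x b. M + (if b then 3 else 2) * m + tap' x)
           (\<lambda>x. xor_stage_A M m (NA x) (out x) (pA x) (tap' x)) (\<lambda>y. xor_stage_B M m (NB y) (pB y))"
proof -
  have NA: "hose_matching M (NA x)" "distinct [0, tap x, out x False, out x True]"
    "\<forall>i \<in> {0, tap x, out x False, out x True}. i < M \<and> NA x i = i" if "length x = n" for x
    using S that by (simp_all add: gh_switch_def)
  then have outs: "hose_matching M (NA x)" "out x False < M" "out x True < M" "out x False \<noteq> out x True"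
    "NA x (out x False) = out x False" "NA x (out x True) = out x True" if "length x = n" for x
    using that by auto
  have NB: "hose_matching M (NB y)" "NB y 0 = 0" if "length y = n" for y
    using S that by (simp_all add: gh_switch_def)
  have pA: "hose_matching m (pA x)" "tap' x < m" "pA x (tap' x) = tap' x" if "length x = n" for x
    using P that by (simp_all add: gh_protocol_def)
  have pB: "hose_matching m (pB y)" if "length y = n" for y
    using P that by (simp add: gh_protocol_def)
  show ?thesis
    unfolding gh_switch_def
  proof (intro conjI allI impI)
    fix x :: "bool list" assume x: "length x = n"
    show "hose_matching (M + 4 * m) (xor_stage_A M m (NA x) (out x) (pA x) (tap' x))"
      by (rule hose_matching_xor_stage_A[OF outs[OF x] pA[OF x]])
    show "distinct [0, tap x, M + (if False then 3 else 2) * m + tap' x, M + (if True then 3 else 2) * m + tap' x]"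
      using NA[OF x] pA(2)[OF x] by auto
    have "M + c * m + tap' x < M + 4 * m" if "c < 4" for c
      using copy_index_lt[OF that pA(2)[OF x]] .
    then show "\<forall>i \<in> {0, tap x, M + (if False then 3 else 2) * m + tap' x, M + (if True then 3 else 2) * m + tap' x}.
        i < M + 4 * m \<and> xor_stage_A M m (NA x) (out x) (pA x) (tap' x) i = i"
      using NA[OF x] xor_stage_A_fixes[OF outs[OF x] pA[OF x]] by auto
  next
    fix y :: "bool list" assume y: "length y = n"
    show "hose_matching (M + 4 * m) (xor_stage_B M m (NB y) (pB y))"
      by (rule hose_matching_xor_stage_B[OF NB(1)[OF y] pB[OF y]])
    have "0 < M"
      using NA(2,3)[of "replicate n False"] by auto
    then show "xor_stage_B M m (NB y) (pB y) 0 = 0"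
      using NB(2)[OF y] by (simp add: xor_stage_B_low)
  next
    fix x y :: "bool list" assume x: "length x = n" and y: "length y = n"
    have "gh_spills (tap' x) (pA x) (pB y) (f x y)"
      using P x y by (simp add: gh_protocol_def)
    moreover obtain k where "gh_path (NA x) (NB y) (True, tap x) (False, out x (g x y)) k"
      using S x y unfolding gh_switch_def by blast
    ultimately show "\<exists>k. gh_path (xor_stage_A M m (NA x) (out x) (pA x) (tap' x)) (xor_stage_B M m (NB y) (pB y))
        (True, tap x) (False, M + (if f x y \<noteq> g x y then 3 else 2) * m + tap' x) k"
      using gh_path_xor_stage[OF outs[OF x] pA[OF x] NB(1)[OF y] pB[OF y]] NA[OF x] by simp
  qed
qed

text \<open>Some protocol exists, so \<open>GH\<close> is a well-defined least element: Bob leads the water to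
  pipe \<open>1 + idx y\<close>, where Alice either lets it spill or sends it back to Bob's side.\<close>

lemma gh_protocol_exists: "\<exists>m tap pA pB. gh_protocol n f m tap pA pB"
proof -
  define Y where "Y = {y :: bool list. length y = n}"
  have "finite Y"
    unfolding Y_def using finite_lists_length_eq[of "UNIV :: bool set" n] by simp
  then obtain idx where idx: "bij_betw idx Y {0..<card Y}"
    using ex_bij_betw_finite_nat by blast
  define N where "N = card Y"
  define pA where
    "pA x = copy_hoses 1 N 2 (\<lambda>i. i) (\<lambda>j. j) (\<lambda>j c. if f x (the_inv_into Y idx j) then 1 - c else c)" for x
  define pB where "pB y = (\<lambda>i. i)(0 := 1 + idx y, 1 + idx y := 0)" for y
  have "gh_protocol n f (1 + 2 * N) (\<lambda>x. 0) pA pB"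
    unfolding gh_protocol_def
  proof (intro conjI allI impI)
    fix x :: "bool list"
    show "0 < 1 + 2 * N" by simp
    show "hose_matching (1 + 2 * N) (pA x)"
      unfolding pA_def by (rule hose_matching_copy_hoses) (auto simp: hose_matching_def)
    show "pA x 0 = 0"
      by (simp add: pA_def copy_hoses_low)
  next
    fix y :: "bool list" assume "length y = n"
    then have "idx y < N"
      using idx by (auto simp: Y_def N_def bij_betw_def)
    then show "hose_matching (1 + 2 * N) (pB y)"
      unfolding pB_def by (intro hose_matching_join) (auto simp: hose_matching_def)
  next
    fix x y :: "bool list" assume "length x = n" and y: "length y = n"
    then have v: "idx y < N" and inv: "the_inv_into Y idx (idx y) = y"
      using idx by (auto simp: Y_def N_def bij_betw_def the_inv_into_f_f)
    have to_alice: "gh_path (pA x) (pB y) (True, 0) (False, 1 + idx y) (Suc 0)"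
      by (simp add: gh_path_Suc gh_open_def gh_step_def pB_def)
    show "gh_spills 0 (pA x) (pB y) (f x y)"
    proof (cases "f x y")
      case True
      then have "pA x (1 + 0 * N + idx y) = 1 + 1 * N + idx y"
        using copy_hoses_copy[of 0 2 "idx y" N 1 "\<lambda>i. i" "\<lambda>j. j"] v inv by (simp add: pA_def)
      then have "gh_path (pA x) (pB y) (False, 1 + idx y) (True, 1 + N + idx y) (Suc 0)"
        using v by (simp add: gh_path_Suc gh_open_def gh_step_def)
      moreover have "gh_open (pA x) (pB y) (True, 1 + N + idx y)"
        using v by (simp add: gh_open_def pB_def)
      ultimately show ?thesis
        using gh_spills_after_path[OF gh_path_trans[OF to_alice]] True by fastforce
    next
      case False
      then have "gh_open (pA x) (pB y) (False, 1 + idx y)"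
        using copy_hoses_copy[of 0 2 "idx y" N 1 "\<lambda>i. i" "\<lambda>j. j"] v inv by (simp add: pA_def gh_open_def)
      then show ?thesis
        using gh_spills_after_path[OF to_alice] False by simp
    qed
  qed
  then show ?thesis by blast
qed

lemma GH_protocol: "\<exists>tap pA pB. gh_protocol n f (GH n f) tap pA pB"
  unfolding GH_def by (rule LeastI_ex) (rule gh_protocol_exists)

lemma GH_le: "gh_protocol n f m tap pA pB \<Longrightarrow> GH n f \<le> m"
  unfolding GH_def by (rule Least_le) blast

lemma GH_pos: "0 < GH n f"
proof -
  obtain tap pA pB where "gh_protocol n f (GH n f) tap pA pB"
    using GH_protocol by blast
  then have "tap (replicate n False) < GH n f"
    by (simp add: gh_protocol_def)
  then show ?thesis by simp
qed

lemma xor_funs_single: "xor_funs [f] = f"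
  by (intro ext) (simp add: xor_funs_def)

lemma xor_funs_Cons: "xor_funs (f # fs) = (\<lambda>x y. f x y \<noteq> xor_funs fs x y)"
  by (intro ext) (simp add: xor_funs_def)

lemma gh_switch_xor_funs:
  assumes "fs \<noteq> []"
  shows "\<exists>M tap out NA NB. M \<le> 4 * (\<Sum>f\<leftarrow>fs. GH n f) \<and> gh_switch n (xor_funs fs) M tap out NA NB"
  using assms
proof (induction fs rule: list_nonempty_induct)
  case (single f)
  obtain tap pA pB where "gh_protocol n f (GH n f) tap pA pB"
    using GH_protocol by blast
  then obtain tap' out NA NB where "gh_switch n (xor_funs [f]) (1 + 3 * GH n f) tap' out NA NB"
    using gh_switch_of_protocol xor_funs_single by metis
  moreover have "1 + 3 * GH n f \<le> 4 * (\<Sum>f\<leftarrow>[f]. GH n f)"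
    using GH_pos[of n f] by simp
  ultimately show ?case by blast
next
  case (cons f fs)
  then obtain M tap out NA NB where M: "M \<le> 4 * (\<Sum>f\<leftarrow>fs. GH n f)"
    and switch: "gh_switch n (xor_funs fs) M tap out NA NB"
    by blast
  obtain tap' pA pB where "gh_protocol n f (GH n f) tap' pA pB"
    using GH_protocol by blast
  from gh_switch_xor[OF switch this]
  have "\<exists>tap out NA NB. gh_switch n (xor_funs (f # fs)) (M + 4 * GH n f) tap out NA NB"
    unfolding xor_funs_Cons by blast
  moreover have "M + 4 * GH n f \<le> 4 * (\<Sum>f\<leftarrow>f # fs. GH n f)"
    using M by simp
  ultimately show ?case by blast
qed

theorem mainTheorem12:
  fixes n :: nat and fs :: "(bool list \<Rightarrow> bool list \<Rightarrow> bool) list"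
  assumes "fs \<noteq> []"
  shows "GH n (xor_funs fs) \<le> 4 * (\<Sum>f\<leftarrow>fs. GH n f)"
proof -
  obtain M tap out NA NB where "M \<le> 4 * (\<Sum>f\<leftarrow>fs. GH n f)" and "gh_switch n (xor_funs fs) M tap out NA NB"
    using gh_switch_xor_funs[OF assms] by blast
  then show ?thesis
    using GH_le[OF gh_switch_protocol] by (meson le_trans)
qed

end
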